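(* Let $f:X\to Y$ be a definable function in a saturated model $\mathcal U$. Then $f$ is always almost saturated if and only if for all global types $p,q\in S_X(\mathcal U)$, if $f_*(p)=f_*(q)$ and this type is not realized, then $p=q$.
   Context: For a definable $Z\subseteq X$, $Z$ is almost saturated with respect to $f$ if $f(Z)\cap f(X\setminus Z)$ is finite; $f$ is always almost saturated if every definable subset of $X$ is almost saturated with respect to $f$. $S_X(\mathcal U)$ is the space of complete types over $\mathcal U$ concentrating on $X$, and $f_*(p)$ is the pushforward type $\{D: f^{-1}(D)\in p\}$. *)

theory Defs
  imports Main "HOL-Library.Equipollence"
begin

text \<open>A first-order structure with universe the type 'a, presented (following
van den Dries) by its families Def n of definable (with parameters) subsets of U^n;
n-tuples are lists of length n.\<close>

definition tup :: "nat \<Rightarrow> 'a list set" where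
  "tup n = {xs. length xs = n}"

definition is_structure :: "(nat \<Rightarrow> 'a list set set) \<Rightarrow> bool" where
  "is_structure Def \<longleftrightarrow>
     (\<forall>n. Def n \<subseteq> Pow (tup n)) \<and>
     (\<forall>n. {} \<in> Def n) \<and>
     (\<forall>n A. A \<in> Def n \<longrightarrow> tup n - A \<in> Def n) \<and>
     (\<forall>n A B. A \<in> Def n \<longrightarrow> B \<in> Def n \<longrightarrow> A \<union> B \<in> Def n) \<and>
     (\<forall>n A. A \<in> Def n \<longrightarrow> {xs @ [y] | xs y. xs \<in> A} \<in> Def (Suc n)) \<and>
     (\<forall>n A. A \<in> Def n \<longrightarrow> {y # xs | xs y. xs \<in> A} \<in> Def (Suc n)) \<and>
     (\<forall>n. {xs \<in> tup (Suc n). hd xs = last xs} \<in> Def (Suc n)) \<and>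
     (\<forall>n A. A \<in> Def (Suc n) \<longrightarrow> butlast ` A \<in> Def n) \<and>
     (\<forall>a. {[a]} \<in> Def 1)"

definition saturated :: "(nat \<Rightarrow> 'a list set set) \<Rightarrow> bool" where
  "saturated Def \<longleftrightarrow>
     (\<forall>n F. F \<subseteq> Def n \<longrightarrow> F \<prec> (UNIV :: 'a set) \<longrightarrow>
        (\<forall>G. G \<subseteq> F \<longrightarrow> finite G \<longrightarrow> tup n \<inter> \<Inter>G \<noteq> {}) \<longrightarrow>
        tup n \<inter> \<Inter>F \<noteq> {})"

definition definable_fun ::
  "(nat \<Rightarrow> 'a list set set) \<Rightarrow> nat \<Rightarrow> nat \<Rightarrow> 'a list set \<Rightarrow> 'a list set
     \<Rightarrow> ('a list \<Rightarrow> 'a list) \<Rightarrow> bool" where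
  "definable_fun Def n m X Y f \<longleftrightarrow>
     X \<in> Def n \<and> Y \<in> Def m \<and> f ` X \<subseteq> Y \<and> {xs @ f xs | xs. xs \<in> X} \<in> Def (n + m)"

definition almost_saturated ::
  "'a list set \<Rightarrow> ('a list \<Rightarrow> 'a list) \<Rightarrow> 'a list set \<Rightarrow> bool" where
  "almost_saturated X f Z \<longleftrightarrow> finite (f ` Z \<inter> f ` (X - Z))"

definition always_almost_saturated ::
  "(nat \<Rightarrow> 'a list set set) \<Rightarrow> nat \<Rightarrow> 'a list set \<Rightarrow> ('a list \<Rightarrow> 'a list) \<Rightarrow> bool" where
  "always_almost_saturated Def n X f \<longleftrightarrow>
     (\<forall>Z. Z \<in> Def n \<longrightarrow> Z \<subseteq> X \<longrightarrow> almost_saturated X f Z)"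

text \<open>Complete types over U in n variables: ultrafilters of the Boolean algebra Def n.
A type concentrates on X if X belongs to it.\<close>
definition is_type :: "(nat \<Rightarrow> 'a list set set) \<Rightarrow> nat \<Rightarrow> 'a list set set \<Rightarrow> bool" where
  "is_type Def n p \<longleftrightarrow>
     p \<subseteq> Def n \<and> tup n \<in> p \<and> {} \<notin> p \<and>
     (\<forall>A B. A \<in> p \<longrightarrow> B \<in> p \<longrightarrow> A \<inter> B \<in> p) \<and>
     (\<forall>A B. A \<in> p \<longrightarrow> B \<in> Def n \<longrightarrow> A \<subseteq> B \<longrightarrow> B \<in> p) \<and>
     (\<forall>A. A \<in> Def n \<longrightarrow> A \<in> p \<or> tup n - A \<in> p)"

definition types_on :: "(nat \<Rightarrow> 'a list set set) \<Rightarrow> nat \<Rightarrow> 'a list set \<Rightarrow> 'a list set set set" where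
  "types_on Def n X = {p. is_type Def n p \<and> X \<in> p}"

definition pushforward ::
  "(nat \<Rightarrow> 'a list set set) \<Rightarrow> nat \<Rightarrow> 'a list set \<Rightarrow> ('a list \<Rightarrow> 'a list)
     \<Rightarrow> 'a list set set \<Rightarrow> 'a list set set" where
  "pushforward Def m X f p = {D \<in> Def m. {xs \<in> X. f xs \<in> D} \<in> p}"

definition realized :: "'a list set set \<Rightarrow> bool" where
  "realized r \<longleftrightarrow> (\<exists>b. \<forall>D \<in> r. b \<in> D)"

end

theory Submission
  imports Defs
begin

text \<open>Global types are ultrafilters of the Boolean algebras of definable sets, and every
  finitely consistent family of definable sets extends to one by Zorn's lemma.

  If some definable \<open>Z \<subseteq> X\<close> is not almost saturated, the infinite definable set
  \<open>W = f(Z) \<inter> f(X - Z)\<close> lies in a type r that also contains all cosingletons, so r is not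
  realized; r lifts both to a type p containing Z and to a type q containing \<open>X - Z\<close>, and
  \<open>f\<^sub>* p = f\<^sub>* q = r\<close> with p \<noteq> q.

  Conversely, let \<open>f\<^sub>* p = f\<^sub>* q\<close> be unrealized and \<open>Z \<in> p\<close>, and put \<open>Z' = Z \<inter> X\<close>. Since the
  pushforward omits every point, it contains a set D avoiding the finite set \<open>f(Z') \<inter> f(X - Z')\<close>.
  Then \<open>f(Z') \<inter> D\<close> belongs to the common pushforward, so its preimage belongs to q; but this
  preimage lies inside Z'. Hence \<open>p \<subseteq> q\<close>, and ultrafilters are maximal.\<close>

text \<open>A structure can only project away the last coordinate. Using the diagonal
  \<open>hd xs = last xs\<close> it can also move the last coordinate to the front, and iterating this
  yields \<open>rotate1\<close>, hence the projection away from the first coordinate.\<close>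

definition rotate_last :: "'a list \<Rightarrow> 'a list" where
  "rotate_last xs = last xs # butlast xs"

lemma rotate_funpow_rotate_last: "xs \<noteq> [] \<Longrightarrow> rotate j ((rotate_last ^^ j) xs) = xs"
proof (induction j)
  case (Suc j)
  let ?ys = "(rotate_last ^^ j) xs"
  have "?ys \<noteq> []" using Suc by auto
  then have "rotate1 (rotate_last ?ys) = ?ys" by (simp add: rotate_last_def)
  then show ?case using Suc by (simp add: rotate1_rotate_swap)
qed simp

lemma funpow_rotate_last_eq_rotate1:
  assumes "length xs = Suc k" shows "(rotate_last ^^ k) xs = rotate1 xs"
proof -
  let ?ys = "(rotate_last ^^ k) xs"
  have rot: "rotate k ?ys = xs" using assms by (intro rotate_funpow_rotate_last) auto
  then have "length ?ys = Suc k" using assms by (metis length_rotate)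
  then have "rotate (Suc k) ?ys = ?ys" by (simp add: rotate_conv_mod)
  then show ?thesis using rot by simp
qed

section \<open>Types as ultrafilters of definable sets\<close>

lemma type_subset_Def: "is_type Def k p \<Longrightarrow> p \<subseteq> Def k"
  and type_tup: "is_type Def k p \<Longrightarrow> tup k \<in> p"
  and type_not_empty: "is_type Def k p \<Longrightarrow> {} \<notin> p"
  and type_Int: "is_type Def k p \<Longrightarrow> A \<in> p \<Longrightarrow> B \<in> p \<Longrightarrow> A \<inter> B \<in> p"
  by (simp_all add: is_type_def)

lemma type_upward: "is_type Def k p \<Longrightarrow> A \<in> p \<Longrightarrow> B \<in> Def k \<Longrightarrow> A \<subseteq> B \<Longrightarrow> B \<in> p"
  unfolding is_type_def by blast

lemma type_Compl: "is_type Def k p \<Longrightarrow> A \<in> Def k \<Longrightarrow> A \<notin> p \<Longrightarrow> tup k - A \<in> p"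
  unfolding is_type_def by blast

lemma type_Inter_finite:
  assumes "is_type Def k p" shows "finite H \<Longrightarrow> H \<subseteq> p \<Longrightarrow> tup k \<inter> \<Inter>H \<in> p"
proof (induction H rule: finite_induct)
  case empty then show ?case using type_tup[OF assms] by simp
next
  case (insert h H)
  then have "h \<inter> (tup k \<inter> \<Inter>H) \<in> p" using type_Int[OF assms] by simp
  then show ?case by (simp add: Int_left_commute)
qed

lemma type_subset_imp_eq:
  assumes p: "is_type Def k p" and q: "is_type Def k q" and "p \<subseteq> q" shows "p = q"
proof (rule ccontr)
  assume "p \<noteq> q"
  then obtain A where A: "A \<in> q" "A \<notin> p" using \<open>p \<subseteq> q\<close> by blast
  then have "tup k - A \<in> q" using type_Compl[OF p] type_subset_Def[OF q] \<open>p \<subseteq> q\<close> by blast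
  then have "A \<inter> (tup k - A) \<in> q" using type_Int[OF q A(1)] by blast
  then show False using type_not_empty[OF q] by simp
qed

lemma unrealized_type_avoids_finite:
  assumes p: "is_type Def k p" and "\<not> realized p" and "finite S"
  shows "\<exists>D \<in> p. D \<inter> S = {}"
  using \<open>finite S\<close>
proof (induction S rule: finite_induct)
  case empty then show ?case using type_tup[OF p] by blast
next
  case (insert b S)
  then obtain D where D: "D \<in> p" "D \<inter> S = {}" by blast
  obtain Db where Db: "Db \<in> p" "b \<notin> Db" using \<open>\<not> realized p\<close> by (auto simp: realized_def)
  then have "D \<inter> Db \<in> p" using type_Int[OF p D(1)] by blast
  then show ?case using D(2) Db(2) by blast
qed

definition finitely_consistent :: "nat \<Rightarrow> 'a list set set \<Rightarrow> bool" where
  "finitely_consistent k F \<longleftrightarrow> (\<forall>G. G \<subseteq> F \<longrightarrow> finite G \<longrightarrow> tup k \<inter> \<Inter>G \<noteq> {})"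

lemma finitely_consistent_insert:
  assumes "\<And>G. G \<subseteq> F \<Longrightarrow> finite G \<Longrightarrow> tup k \<inter> A \<inter> \<Inter>G \<noteq> {}"
  shows "finitely_consistent k (insert A F)"
  unfolding finitely_consistent_def
proof (intro allI impI)
  fix G assume "G \<subseteq> insert A F" "finite G"
  then have "G - {A} \<subseteq> F" "finite (G - {A})" by auto
  then have "tup k \<inter> A \<inter> \<Inter>(G - {A}) \<noteq> {}" by (rule assms)
  moreover have "A \<inter> \<Inter>(G - {A}) \<subseteq> \<Inter>G" by blast
  ultimately show "tup k \<inter> \<Inter>G \<noteq> {}" by blast
qed

section \<open>Definable sets\<close>

locale fo_structure =
  fixes Def :: "nat \<Rightarrow> 'a list set set"
  assumes is_structure: "is_structure Def"
begin

lemma definable_subset_tup: "A \<in> Def k \<Longrightarrow> A \<subseteq> tup k"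
  and definable_empty: "{} \<in> Def k"
  and definable_Compl: "A \<in> Def k \<Longrightarrow> tup k - A \<in> Def k"
  and definable_Un: "A \<in> Def k \<Longrightarrow> B \<in> Def k \<Longrightarrow> A \<union> B \<in> Def k"
  and definable_snoc: "A \<in> Def k \<Longrightarrow> {xs @ [y] | xs y. xs \<in> A} \<in> Def (Suc k)"
  and definable_Cons: "A \<in> Def k \<Longrightarrow> {y # xs | xs y. xs \<in> A} \<in> Def (Suc k)"
  and definable_hd_eq_last: "{xs \<in> tup (Suc k). hd xs = last xs} \<in> Def (Suc k)"
  and definable_butlast_image: "A \<in> Def (Suc k) \<Longrightarrow> butlast ` A \<in> Def k"
  and definable_singleton1: "{[a]} \<in> Def 1"
  using is_structure unfolding is_structure_def by (simp_all add: subset_iff)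

lemma definable_tup: "tup k \<in> Def k"
  using definable_Compl[OF definable_empty] by simp

lemma definable_Int: "A \<in> Def k \<Longrightarrow> B \<in> Def k \<Longrightarrow> A \<inter> B \<in> Def k"
proof -
  assume "A \<in> Def k" "B \<in> Def k"
  moreover have "A \<inter> B = tup k - ((tup k - A) \<union> (tup k - B))"
    using definable_subset_tup[OF \<open>A \<in> Def k\<close>] by blast
  ultimately show ?thesis by (simp add: definable_Compl definable_Un)
qed

lemma definable_Diff: "A \<in> Def k \<Longrightarrow> B \<in> Def k \<Longrightarrow> A - B \<in> Def k"
proof -
  assume "A \<in> Def k" "B \<in> Def k"
  moreover have "A - B = A \<inter> (tup k - B)" using definable_subset_tup[OF \<open>A \<in> Def k\<close>] by blast
  ultimately show ?thesis by (simp add: definable_Int definable_Compl)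
qed

lemma definable_append_tup: "A \<in> Def k \<Longrightarrow> {xs @ ys | xs ys. xs \<in> A \<and> ys \<in> tup j} \<in> Def (k + j)"
proof (induction j)
  case (Suc j)
  let ?C = "{xs @ ys | xs ys. xs \<in> A \<and> ys \<in> tup j}"
  have "{xs @ ys | xs ys. xs \<in> A \<and> ys \<in> tup (Suc j)} = {zs @ [y] | zs y. zs \<in> ?C}"
  proof (intro equalityI subsetI)
    fix w assume "w \<in> {xs @ ys | xs ys. xs \<in> A \<and> ys \<in> tup (Suc j)}"
    then obtain xs ys y where "w = (xs @ ys) @ [y]" "xs \<in> A" "ys \<in> tup j"
      by (auto simp: tup_def length_Suc_conv_rev)
    then show "w \<in> {zs @ [y] | zs y. zs \<in> ?C}" by blast
  next
    fix w assume "w \<in> {zs @ [y] | zs y. zs \<in> ?C}"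
    then obtain xs ys y where "w = xs @ (ys @ [y])" "xs \<in> A" "ys @ [y] \<in> tup (Suc j)"
      by (auto simp: tup_def)
    then show "w \<in> {xs @ ys | xs ys. xs \<in> A \<and> ys \<in> tup (Suc j)}" by blast
  qed
  then show ?case using definable_snoc[OF Suc.IH[OF Suc.prems]] by simp
qed (simp add: tup_def)

lemma definable_tup_append: "A \<in> Def k \<Longrightarrow> {ys @ xs | xs ys. xs \<in> A \<and> ys \<in> tup j} \<in> Def (j + k)"
proof (induction j)
  case (Suc j)
  let ?C = "{ys @ xs | xs ys. xs \<in> A \<and> ys \<in> tup j}"
  have "{ys @ xs | xs ys. xs \<in> A \<and> ys \<in> tup (Suc j)} = {y # zs | zs y. zs \<in> ?C}"
  proof (intro equalityI subsetI)
    fix w assume "w \<in> {ys @ xs | xs ys. xs \<in> A \<and> ys \<in> tup (Suc j)}"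
    then obtain xs ys y where "w = y # (ys @ xs)" "xs \<in> A" "ys \<in> tup j"
      by (auto simp: tup_def length_Suc_conv)
    then show "w \<in> {y # zs | zs y. zs \<in> ?C}" by blast
  next
    fix w assume "w \<in> {y # zs | zs y. zs \<in> ?C}"
    then obtain xs ys y where "w = (y # ys) @ xs" "xs \<in> A" "y # ys \<in> tup (Suc j)"
      by (auto simp: tup_def)
    then show "w \<in> {ys @ xs | xs ys. xs \<in> A \<and> ys \<in> tup (Suc j)}" by blast
  qed
  then show ?case using definable_Cons[OF Suc.IH[OF Suc.prems]] by simp
qed (simp add: tup_def)

lemma definable_append:
  assumes A: "A \<in> Def k" and B: "B \<in> Def j"
  shows "{xs @ ys | xs ys. xs \<in> A \<and> ys \<in> B} \<in> Def (k + j)"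
proof -
  let ?L = "{xs @ ys | xs ys. xs \<in> A \<and> ys \<in> tup j}" and ?R = "{ys @ xs | xs ys. xs \<in> B \<and> ys \<in> tup k}"
  have "{xs @ ys | xs ys. xs \<in> A \<and> ys \<in> B} = ?L \<inter> ?R"
  proof (intro equalityI subsetI)
    fix w assume "w \<in> {xs @ ys | xs ys. xs \<in> A \<and> ys \<in> B}"
    then show "w \<in> ?L \<inter> ?R" using definable_subset_tup[OF A] definable_subset_tup[OF B] by blast
  next
    fix w assume "w \<in> ?L \<inter> ?R"
    then obtain xs ys xs' ys' where w: "w = xs @ ys" "xs \<in> A" "w = ys' @ xs'" "xs' \<in> B" "ys' \<in> tup k"
      by blast
    then have "length xs = length ys'" using definable_subset_tup[OF A] by (auto simp: tup_def)
    then have "xs = ys' \<and> ys = xs'" using w(1,3) by (simp add: append_eq_append_conv)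
    then show "w \<in> {xs @ ys | xs ys. xs \<in> A \<and> ys \<in> B}" using w by blast
  qed
  then show ?thesis
    using definable_Int[OF definable_append_tup[OF A] definable_tup_append[OF B]] by (simp add: add.commute)
qed

lemma definable_take_image: "A \<in> Def (k + j) \<Longrightarrow> take k ` A \<in> Def k"
proof (induction j arbitrary: A)
  case 0
  then have "take k ` A = A" using definable_subset_tup[OF 0] by (force simp: tup_def)
  then show ?case using 0 by simp
next
  case (Suc j)
  have "butlast ` A \<in> Def (k + j)" using definable_butlast_image Suc.prems by simp
  then have "take k ` butlast ` A \<in> Def k" by (rule Suc.IH)
  moreover have "take k ` butlast ` A = take k ` A"
    using definable_subset_tup[OF Suc.prems] by (force simp: tup_def image_image take_butlast)
  ultimately show ?case by simp
qed

lemma definable_rotate_last_image: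
  assumes A: "A \<in> Def (Suc k)" shows "rotate_last ` A \<in> Def (Suc k)"
proof -
  let ?B = "{ys @ xs | xs ys. xs \<in> A \<and> ys \<in> tup 1} \<inter> {xs \<in> tup (Suc (Suc k)). hd xs = last xs}"
  have "{ys @ xs | xs ys. xs \<in> A \<and> ys \<in> tup 1} \<in> Def (Suc (Suc k))"
    using definable_tup_append[OF A, of 1] by simp
  then have "?B \<in> Def (Suc (Suc k))" using definable_Int definable_hd_eq_last by blast
  moreover have "?B = (\<lambda>xs. last xs # xs) ` A"
  proof (intro equalityI subsetI)
    fix zs assume "zs \<in> ?B"
    then obtain y xs where "zs = y # xs" "xs \<in> A" "hd zs = last zs"
      by (auto simp: tup_def length_Suc_conv)
    moreover have "xs \<noteq> []" using \<open>xs \<in> A\<close> definable_subset_tup[OF A] by (auto simp: tup_def)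
    ultimately show "zs \<in> (\<lambda>xs. last xs # xs) ` A" by auto
  next
    fix zs assume "zs \<in> (\<lambda>xs. last xs # xs) ` A"
    then obtain xs where "zs = last xs # xs" "xs \<in> A" by blast
    moreover have "length xs = Suc k" using \<open>xs \<in> A\<close> definable_subset_tup[OF A] by (auto simp: tup_def)
    ultimately have "zs = [last xs] @ xs" "[last xs] \<in> tup 1" "zs \<in> tup (Suc (Suc k))" "hd zs = last zs"
      by (auto simp: tup_def)
    then show "zs \<in> ?B" using \<open>xs \<in> A\<close> by blast
  qed
  moreover have "butlast ` (\<lambda>xs. last xs # xs) ` A = rotate_last ` A"
    using definable_subset_tup[OF A]
    by (auto simp: image_image tup_def rotate_last_def intro!: image_cong)
  ultimately show ?thesis using definable_butlast_image by metis
qed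

lemma definable_rotate1_image: "A \<in> Def (Suc k) \<Longrightarrow> rotate1 ` A \<in> Def (Suc k)"
proof -
  assume A: "A \<in> Def (Suc k)"
  have "(rotate_last ^^ j) ` A \<in> Def (Suc k)" for j
  proof (induction j)
    case (Suc j)
    have "(rotate_last ^^ Suc j) ` A = rotate_last ` (rotate_last ^^ j) ` A"
      by (simp add: image_comp)
    then show ?case using definable_rotate_last_image[OF Suc] by simp
  qed (simp add: A)
  moreover have "(rotate_last ^^ k) ` A = rotate1 ` A"
    using definable_subset_tup[OF A] by (auto simp: tup_def funpow_rotate_last_eq_rotate1 intro!: image_cong)
  ultimately show ?thesis by metis
qed

lemma definable_drop_image: "A \<in> Def (j + k) \<Longrightarrow> drop j ` A \<in> Def k"
proof (induction j arbitrary: A)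
  case (Suc j)
  have "tl ` A = butlast ` rotate1 ` A"
    using definable_subset_tup[OF Suc.prems]
    by (force simp: tup_def image_image length_Suc_conv intro!: image_cong)
  then have "tl ` A \<in> Def (j + k)"
    using definable_butlast_image[OF definable_rotate1_image] Suc.prems by simp
  then have "drop j ` tl ` A \<in> Def k" by (rule Suc.IH)
  moreover have "drop j ` tl ` A = drop (Suc j) ` A" by (simp add: image_image drop_Suc drop_tl)
  ultimately show ?case by simp
qed simp

lemma definable_singleton: "c \<in> tup k \<Longrightarrow> {c} \<in> Def k"
proof (induction c arbitrary: k)
  case Nil
  then show ?case using definable_tup[of 0] by (simp add: tup_def)
next
  case (Cons a c)
  then obtain k' where "k = Suc k'" "c \<in> tup k'" by (auto simp: tup_def)
  moreover have "{a # c} = {xs @ ys | xs ys. xs \<in> {[a]} \<and> ys \<in> {c}}" by auto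
  ultimately show ?case using definable_append[OF definable_singleton1 Cons.IH] by simp
qed

lemma maximal_finitely_consistent_is_type:
  assumes sub: "M \<subseteq> Def k" and cons: "finitely_consistent k M"
    and max: "\<And>A. A \<in> Def k \<Longrightarrow> finitely_consistent k (insert A M) \<Longrightarrow> A \<in> M"
  shows "is_type Def k M"
proof -
  have cons': "tup k \<inter> \<Inter>G \<noteq> {}" if "G \<subseteq> M" "finite G" for G
    using cons that unfolding finitely_consistent_def by blast
  have mem: "A \<in> M" if "A \<in> Def k" "\<And>G. G \<subseteq> M \<Longrightarrow> finite G \<Longrightarrow> tup k \<inter> A \<inter> \<Inter>G \<noteq> {}" for A
    using max[OF that(1) finitely_consistent_insert] that(2) by blast
  have "tup k \<in> M" using mem[OF definable_tup] cons' by simp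
  moreover have "{} \<notin> M" using cons'[of "{{}}"] by auto
  moreover have "A \<inter> B \<in> M" if "A \<in> M" "B \<in> M" for A B
  proof (rule mem)
    show "A \<inter> B \<in> Def k" using that sub definable_Int by blast
    fix G assume "G \<subseteq> M" "finite G"
    then show "tup k \<inter> (A \<inter> B) \<inter> \<Inter>G \<noteq> {}" using cons'[of "insert A (insert B G)"] that by auto
  qed
  moreover have "B \<in> M" if "A \<in> M" "B \<in> Def k" "A \<subseteq> B" for A B
  proof (rule mem[OF that(2)])
    fix G assume "G \<subseteq> M" "finite G"
    then show "tup k \<inter> B \<inter> \<Inter>G \<noteq> {}" using cons'[of "insert A G"] that by auto
  qed
  moreover have "A \<in> M \<or> tup k - A \<in> M" if A: "A \<in> Def k" for A
  proof (rule ccontr)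
    assume "\<not> (A \<in> M \<or> tup k - A \<in> M)"
    then obtain G1 G2 where G: "G1 \<subseteq> M" "finite G1" "tup k \<inter> A \<inter> \<Inter>G1 = {}"
      "G2 \<subseteq> M" "finite G2" "tup k \<inter> (tup k - A) \<inter> \<Inter>G2 = {}"
      using mem[OF A] mem[OF definable_Compl[OF A]] by metis
    then have "tup k \<inter> \<Inter>(G1 \<union> G2) = {}" by blast
    then show False using cons'[of "G1 \<union> G2"] G by simp
  qed
  ultimately show ?thesis using sub unfolding is_type_def by blast
qed

lemma finitely_consistent_extends_to_type:
  assumes "F \<subseteq> Def k" "finitely_consistent k F"
  shows "\<exists>p. is_type Def k p \<and> F \<subseteq> p"
proof -
  let ?C = "{G. F \<subseteq> G \<and> G \<subseteq> Def k \<and> finitely_consistent k G}"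
  have "\<Union>\<G> \<in> ?C" if ne: "\<G> \<noteq> {}" and chain: "subset.chain ?C \<G>" for \<G>
  proof -
    have sub: "\<G> \<subseteq> ?C" using chain by (simp add: subset.chain_def)
    have "finitely_consistent k (\<Union>\<G>)"
      unfolding finitely_consistent_def
    proof (intro allI impI)
      fix G assume "G \<subseteq> \<Union>\<G>" "finite G"
      then obtain H where "H \<in> \<G>" "G \<subseteq> H" using finite_subset_Union_chain[OF _ _ ne chain] by blast
      moreover have "finitely_consistent k H" using sub \<open>H \<in> \<G>\<close> by blast
      ultimately show "tup k \<inter> \<Inter>G \<noteq> {}"
        using \<open>finite G\<close> unfolding finitely_consistent_def by blast
    qed
    moreover have "F \<subseteq> \<Union>\<G>" using ne sub by blast
    moreover have "\<Union>\<G> \<subseteq> Def k" using sub by blast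
    ultimately show ?thesis by simp
  qed
  moreover have "?C \<noteq> {}" using assms by blast
  ultimately obtain M where "M \<in> ?C" and max: "\<forall>G \<in> ?C. M \<subseteq> G \<longrightarrow> G = M"
    using subset_Zorn_nonempty[of ?C] by meson
  then have M: "F \<subseteq> M" "M \<subseteq> Def k" "finitely_consistent k M" by simp_all
  have "is_type Def k M"
  proof (rule maximal_finitely_consistent_is_type[OF M(2,3)])
    fix A assume "A \<in> Def k" "finitely_consistent k (insert A M)"
    then have "insert A M \<in> ?C" using M by blast
    then have "insert A M = M" using max by (meson subset_insertI)
    then show "A \<in> M" by blast
  qed
  then show ?thesis using M(1) by blast
qed

lemma infinite_definable_in_unrealized_type:
  assumes W: "W \<in> Def k" "infinite W"
  shows "\<exists>r. is_type Def k r \<and> W \<in> r \<and> \<not> realized r"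
proof -
  let ?cofin = "(\<lambda>c. tup k - {c}) ` tup k"
  have "finitely_consistent k (insert W ?cofin)"
  proof (rule finitely_consistent_insert)
    fix G :: "'a list set set" assume "G \<subseteq> ?cofin" "finite G"
    then obtain C where C: "C \<subseteq> tup k" "finite C" "G = (\<lambda>c. tup k - {c}) ` C"
      by (meson finite_subset_image)
    have "infinite (W - C)" using Diff_infinite_finite[OF C(2) W(2)] .
    then obtain w where "w \<in> W" "w \<notin> C" by (metis Diff_iff finite.emptyI ex_in_conv)
    then have "w \<in> tup k \<inter> W \<inter> \<Inter>G" using C(3) definable_subset_tup[OF W(1)] by auto
    then show "tup k \<inter> W \<inter> \<Inter>G \<noteq> {}" by blast
  qed
  moreover have "insert W ?cofin \<subseteq> Def k"
    using W(1) definable_Compl[OF definable_singleton] by blast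
  ultimately obtain r where r: "is_type Def k r" "insert W ?cofin \<subseteq> r"
    using finitely_consistent_extends_to_type by blast
  have "\<not> realized r"
  proof
    assume "realized r"
    then obtain b where b: "\<forall>D \<in> r. b \<in> D" by (auto simp: realized_def)
    then have "b \<in> tup k" using type_tup[OF r(1)] by blast
    then have "tup k - {b} \<in> r" using r(2) by blast
    then show False using b by blast
  qed
  then show ?thesis using r by blast
qed

end

section \<open>Pushforward of types along a definable function\<close>

locale definable_function = fo_structure Def for Def :: "nat \<Rightarrow> 'a list set set" +
  fixes n m :: nat and X Y :: "'a list set" and f :: "'a list \<Rightarrow> 'a list"
  assumes definable_fun: "definable_fun Def n m X Y f"
begin

abbreviation push :: "'a list set set \<Rightarrow> 'a list set set" where
  "push p \<equiv> pushforward Def m X f p"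

lemma definable_domain: "X \<in> Def n"
  and definable_codomain: "Y \<in> Def m"
  and image_subset_codomain: "f ` X \<subseteq> Y"
  and definable_graph: "{xs @ f xs | xs. xs \<in> X} \<in> Def (n + m)"
  using definable_fun unfolding definable_fun_def by simp_all

lemma length_domain: "x \<in> X \<Longrightarrow> length x = n"
  using definable_subset_tup[OF definable_domain] by (auto simp: tup_def)

lemma length_value: "x \<in> X \<Longrightarrow> length (f x) = m"
  using image_subset_codomain definable_subset_tup[OF definable_codomain] by (auto simp: tup_def)

lemma graph_eq_append_iff:
  "x \<in> X \<Longrightarrow> ys \<in> tup n \<Longrightarrow> x @ f x = ys @ zs \<longleftrightarrow> ys = x \<and> zs = f x"
  using length_domain by (auto simp: tup_def append_eq_append_conv)

lemma definable_preimage: "D \<in> Def m \<Longrightarrow> {x \<in> X. f x \<in> D} \<in> Def n"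
proof -
  assume D: "D \<in> Def m"
  let ?H = "{xs @ f xs | xs. xs \<in> X} \<inter> {ys @ zs | zs ys. zs \<in> D \<and> ys \<in> tup n}"
  have "take n ` ?H = {x \<in> X. f x \<in> D}"
  proof (intro equalityI subsetI)
    fix x assume "x \<in> take n ` ?H"
    then obtain xs ys zs where "x = take n (xs @ f xs)" "xs \<in> X" "xs @ f xs = ys @ zs" "zs \<in> D" "ys \<in> tup n"
      by blast
    then show "x \<in> {x \<in> X. f x \<in> D}" using graph_eq_append_iff length_domain by simp
  next
    fix x assume x: "x \<in> {x \<in> X. f x \<in> D}"
    then have "x \<in> tup n" by (simp add: tup_def length_domain)
    then have "x @ f x \<in> ?H" using x by blast
    moreover have "x = take n (x @ f x)" using x length_domain by simp
    ultimately show "x \<in> take n ` ?H" by (rule rev_image_eqI)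
  qed
  then show ?thesis
    using definable_take_image[OF definable_Int[OF definable_graph definable_tup_append[OF D]]] by simp
qed

lemma definable_image: "Z \<in> Def n \<Longrightarrow> Z \<subseteq> X \<Longrightarrow> f ` Z \<in> Def m"
proof -
  assume Z: "Z \<in> Def n" "Z \<subseteq> X"
  let ?H = "{xs @ f xs | xs. xs \<in> X} \<inter> {ys @ zs | ys zs. ys \<in> Z \<and> zs \<in> tup m}"
  have "drop n ` ?H = f ` Z"
  proof (intro equalityI subsetI)
    fix y assume "y \<in> drop n ` ?H"
    then obtain xs ys zs where "y = drop n (xs @ f xs)" "xs \<in> X" "xs @ f xs = ys @ zs" "ys \<in> Z"
      by blast
    moreover have "ys \<in> tup n" using \<open>ys \<in> Z\<close> definable_subset_tup[OF Z(1)] by blast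
    ultimately show "y \<in> f ` Z" using graph_eq_append_iff length_domain by auto
  next
    fix y assume "y \<in> f ` Z"
    then obtain x where x: "x \<in> Z" "y = f x" by blast
    then have "f x \<in> tup m" using Z(2) length_value by (auto simp: tup_def)
    then have "x @ f x \<in> ?H" using x Z(2) by blast
    moreover have "y = drop n (x @ f x)" using x Z(2) length_domain by auto
    ultimately show "y \<in> drop n ` ?H" by (rule rev_image_eqI)
  qed
  then show ?thesis
    using definable_drop_image[OF definable_Int[OF definable_graph definable_append_tup[OF Z(1)]]] by simp
qed

lemma is_type_pushforward:
  assumes p: "p \<in> types_on Def n X" shows "is_type Def m (push p)"
proof -
  have pt: "is_type Def n p" and Xp: "X \<in> p" using p by (auto simp: types_on_def)
  have "{x \<in> X. f x \<in> tup m} = X" using length_value by (auto simp: tup_def)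
  then have "tup m \<in> push p" using Xp definable_tup by (simp add: pushforward_def)
  moreover have "{} \<notin> push p" using type_not_empty[OF pt] by (simp add: pushforward_def)
  moreover have "A \<inter> B \<in> push p" if "A \<in> push p" "B \<in> push p" for A B
  proof -
    have "{x \<in> X. f x \<in> A} \<inter> {x \<in> X. f x \<in> B} \<in> p"
      using that type_Int[OF pt] by (simp add: pushforward_def)
    moreover have "{x \<in> X. f x \<in> A} \<inter> {x \<in> X. f x \<in> B} = {x \<in> X. f x \<in> A \<inter> B}" by blast
    ultimately show ?thesis using that definable_Int by (simp add: pushforward_def)
  qed
  moreover have "B \<in> push p" if "A \<in> push p" "B \<in> Def m" "A \<subseteq> B" for A B
    using that type_upward[OF pt _ definable_preimage[OF that(2)]]
    by (auto simp: pushforward_def)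
  moreover have "A \<in> push p \<or> tup m - A \<in> push p" if A: "A \<in> Def m" for A
  proof (cases "{x \<in> X. f x \<in> A} \<in> p")
    case False
    then have "X \<inter> (tup n - {x \<in> X. f x \<in> A}) \<in> p"
      using type_Int[OF pt Xp] type_Compl[OF pt definable_preimage[OF A]] by blast
    moreover have "X \<inter> (tup n - {x \<in> X. f x \<in> A}) = {x \<in> X. f x \<in> tup m - A}"
      using definable_subset_tup[OF definable_domain] length_value by (auto simp: tup_def)
    ultimately show ?thesis using definable_Compl[OF A] by (simp add: pushforward_def)
  qed (simp add: pushforward_def A)
  ultimately show ?thesis unfolding is_type_def pushforward_def by blast
qed

lemma exists_type_with_pushforward:
  assumes r: "is_type Def m r" and V: "V \<in> Def n" "V \<subseteq> X" and W: "W \<in> r" "W \<subseteq> f ` V"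
  shows "\<exists>p \<in> types_on Def n X. V \<in> p \<and> push p = r"
proof -
  let ?pre = "\<lambda>D. {x \<in> X. f x \<in> D}"
  have "r \<subseteq> Def m" using type_subset_Def[OF r] .
  then have F: "insert V (?pre ` r) \<subseteq> Def n" using V(1) definable_preimage by blast
  have "finitely_consistent n (insert V (?pre ` r))"
  proof (rule finitely_consistent_insert)
    fix G assume "G \<subseteq> ?pre ` r" "finite G"
    then obtain H where H: "H \<subseteq> r" "finite H" "G = ?pre ` H"
      by (meson finite_subset_image)
    have "finite (insert W H)" "insert W H \<subseteq> r" using H W(1) by auto
    then have "tup m \<inter> \<Inter>(insert W H) \<in> r" by (rule type_Inter_finite[OF r])
    moreover have "{} \<notin> r" using type_not_empty[OF r] .
    ultimately obtain y where "y \<in> tup m \<inter> \<Inter>(insert W H)" by (metis ex_in_conv)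
    then have "y \<in> W" "\<forall>D \<in> H. y \<in> D" by auto
    moreover obtain x where "x \<in> V" "y = f x" using W(2) \<open>y \<in> W\<close> by blast
    ultimately have "x \<in> tup n \<inter> V \<inter> \<Inter>G"
      using H(3) V(2) definable_subset_tup[OF V(1)] by auto
    then show "tup n \<inter> V \<inter> \<Inter>G \<noteq> {}" by blast
  qed
  then obtain p where p: "is_type Def n p" "insert V (?pre ` r) \<subseteq> p"
    using finitely_consistent_extends_to_type[OF F] by blast
  then have "V \<in> p" by blast
  then have "X \<in> p" using type_upward[OF p(1) _ definable_domain V(2)] by blast
  then have types: "p \<in> types_on Def n X" using p(1) by (simp add: types_on_def)
  have "r \<subseteq> push p"
  proof
    fix D assume "D \<in> r"
    then show "D \<in> push p" using p(2) \<open>r \<subseteq> Def m\<close> by (auto simp: pushforward_def)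
  qed
  then have "push p = r" using type_subset_imp_eq[OF r is_type_pushforward[OF types]] by simp
  then show ?thesis using types \<open>V \<in> p\<close> by blast
qed

lemma unrealized_pushforward_eq_imp_subset:
  assumes aas: "always_almost_saturated Def n X f"
    and p: "p \<in> types_on Def n X" and q: "q \<in> types_on Def n X"
    and eq: "push p = push q" and unrealized: "\<not> realized (push p)"
  shows "p \<subseteq> q"
proof
  have pt: "is_type Def n p" "X \<in> p" and qt: "is_type Def n q"
    using p q by (simp_all add: types_on_def)
  fix Z assume "Z \<in> p"
  then have ZD: "Z \<in> Def n" using type_subset_Def[OF pt(1)] by blast
  define Z' where "Z' = Z \<inter> X"
  have Z'D: "Z' \<in> Def n" and Z'p: "Z' \<in> p" and Z'X: "Z' \<subseteq> X"
    unfolding Z'_def using definable_Int[OF ZD definable_domain] type_Int[OF pt(1) \<open>Z \<in> p\<close> pt(2)]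
    by simp_all
  define S where "S = f ` Z' \<inter> f ` (X - Z')"
  have "almost_saturated X f Z'" using aas Z'D Z'X by (simp add: always_almost_saturated_def)
  then have "finite S" by (simp add: almost_saturated_def S_def)
  then obtain D where D: "D \<in> push p" "D \<inter> S = {}"
    using unrealized_type_avoids_finite[OF is_type_pushforward[OF p] unrealized] by blast
  then have DD: "D \<in> Def m" and preD: "{x \<in> X. f x \<in> D} \<in> p" by (simp_all add: pushforward_def)
  define E where "E = f ` Z' \<inter> D"
  have ED: "E \<in> Def m" unfolding E_def using definable_Int[OF definable_image[OF Z'D Z'X] DD] .
  have "Z' \<inter> {x \<in> X. f x \<in> D} \<in> p" using type_Int[OF pt(1) Z'p preD] .
  moreover have "Z' \<inter> {x \<in> X. f x \<in> D} \<subseteq> {x \<in> X. f x \<in> E}" using Z'X by (auto simp: E_def)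
  ultimately have "{x \<in> X. f x \<in> E} \<in> p" using type_upward[OF pt(1) _ definable_preimage[OF ED]] by blast
  then have "E \<in> push p" using ED by (simp add: pushforward_def)
  then have "E \<in> push q" using eq by simp
  then have "{x \<in> X. f x \<in> E} \<in> q" by (simp add: pushforward_def)
  moreover have "{x \<in> X. f x \<in> E} \<subseteq> Z" using D(2) unfolding E_def S_def Z'_def by blast
  ultimately show "Z \<in> q" using type_upward[OF qt _ ZD] by blast
qed

lemma always_almost_saturated_if_unrealized_pushforward_inj:
  assumes inj: "\<forall>p q. p \<in> types_on Def n X \<longrightarrow> q \<in> types_on Def n X \<longrightarrow>
      push p = push q \<longrightarrow> \<not> realized (push p) \<longrightarrow> p = q"
  shows "always_almost_saturated Def n X f"
  unfolding always_almost_saturated_def almost_saturated_def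
proof (intro allI impI, rule ccontr)
  fix Z assume Z: "Z \<in> Def n" "Z \<subseteq> X" and inf: "infinite (f ` Z \<inter> f ` (X - Z))"
  have XZ: "X - Z \<in> Def n" using definable_Diff[OF definable_domain Z(1)] .
  have "f ` Z \<inter> f ` (X - Z) \<in> Def m"
    using definable_Int[OF definable_image[OF Z] definable_image[OF XZ Diff_subset]] .
  then obtain r where r: "is_type Def m r" "f ` Z \<inter> f ` (X - Z) \<in> r" "\<not> realized r"
    using infinite_definable_in_unrealized_type[OF _ inf] by blast
  obtain p where p: "p \<in> types_on Def n X" "Z \<in> p" "push p = r"
    using exists_type_with_pushforward[OF r(1) Z r(2) Int_lower1] by blast
  obtain q where q: "q \<in> types_on Def n X" "X - Z \<in> q" "push q = r"
    using exists_type_with_pushforward[OF r(1) XZ Diff_subset r(2) Int_lower2] by blast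
  have qt: "is_type Def n q" using q(1) by (simp add: types_on_def)
  have "p = q" using inj[rule_format, OF p(1) q(1)] p(3) q(3) r(3) by simp
  then have "Z \<inter> (X - Z) \<in> q" using type_Int[OF qt] p(2) q(2) by blast
  then show False using type_not_empty[OF qt] by simp
qed

end

theorem lemma2p22:
  fixes Def :: "nat \<Rightarrow> 'a list set set"
    and X Y :: "'a list set" and f :: "'a list \<Rightarrow> 'a list" and n m :: nat
  assumes "is_structure Def"
    and "saturated Def"
    and "definable_fun Def n m X Y f"
  shows "always_almost_saturated Def n X f \<longleftrightarrow>
         (\<forall>p q. p \<in> types_on Def n X \<longrightarrow> q \<in> types_on Def n X \<longrightarrow>
            pushforward Def m X f p = pushforward Def m X f q \<longrightarrow>
            \<not> realized (pushforward Def m X f p) \<longrightarrow> p = q)"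
proof -
  interpret definable_function Def n m X Y f
    by unfold_locales (rule assms(1), rule assms(3))
  show ?thesis
  proof
    assume aas: "always_almost_saturated Def n X f"
    show "\<forall>p q. p \<in> types_on Def n X \<longrightarrow> q \<in> types_on Def n X \<longrightarrow>
        push p = push q \<longrightarrow> \<not> realized (push p) \<longrightarrow> p = q"
    proof (intro allI impI)
      fix p q assume p: "p \<in> types_on Def n X" and q: "q \<in> types_on Def n X"
        and eq: "push p = push q" and unrealized: "\<not> realized (push p)"
      have "p \<subseteq> q" using unrealized_pushforward_eq_imp_subset[OF aas p q eq unrealized] .
      then show "p = q" using type_subset_imp_eq[of Def n p q] p q by (simp add: types_on_def)
    qed
  qed (rule always_almost_saturated_if_unrealized_pushforward_inj)
qed

end
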